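(* Let $\mu_0\in\mathbb{C}$ and let $\xi=(\mu_0+z^2)\partial_z+(\bar\mu_0+\bar z^2)\partial_{\bar z}$ be a GCKV in canonical form. The subgroup of $SL(2,\mathbb{C})$ consisting of those $\mathbb{A}$ with $\chi^{\mathbb{A}}_\star(\xi)=\xi$ is $$\mathbb{A}_{\mu_0}=\left\{\begin{pmatrix}\delta&-\gamma\mu_0\\ \gamma&\delta\end{pmatrix}:\ \gamma,\delta\in\mathbb{C},\ \delta^2+\mu_0\gamma^2=1\right\}.$$
   Context: $\mathbb{E}^2$ is the Euclidean plane with Cartesian coordinates $\{x,y\}$ and $z=\frac12(x-iy)$. A GCKV with parameters $\mu\in\mathbb{C}^3$ is $(\mu_0+\mu_1z+\frac12\mu_2z^2)\partial_z+\text{c.c.}$; it is canonical when $\mu_1=0,\mu_2=2$. For $\mathbb{A}=\begin{pmatrix}\alpha&\beta\\ \gamma&\delta\end{pmatrix}\in SL(2,\mathbb{C})$, $\chi^{\mathbb{A}}$ is the Möbius transformation $z\mapsto(\alpha z+\beta)/(\gamma z+\delta)$ and $\chi^{\mathbb{A}}_\star$ denotes push-forward of vector fields (the push-forward of a GCKV is again a GCKV). *)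

theory Defs
  imports "HOL-Analysis.Analysis"
begin

definition mobius :: "complex^2^2 \<Rightarrow> complex \<Rightarrow> complex" where
  "mobius A z = (A$1$1 * z + A$1$2) / (A$2$1 * z + A$2$2)"

text \<open>Holomorphic coefficient of the GCKV with parameters (mu0, mu1, mu2):
  xi = (mu0 + mu1 z + mu2/2 z^2) d/dz + c.c.\<close>
definition gckv_coeff :: "complex \<Rightarrow> complex \<Rightarrow> complex \<Rightarrow> complex \<Rightarrow> complex" where
  "gckv_coeff m0 m1 m2 z = m0 + m1 * z + (m2 / 2) * z^2"

text \<open>chi^A_* xi = xi for xi = f d/dz + c.c.: at every point w = chi^A(z) of the plane
  the push-forward vector (chi^A)'(z) f(z) equals f(w). The antiholomorphic
  part is the complex conjugate of this identity.\<close>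
definition pushforward_fixes :: "complex^2^2 \<Rightarrow> (complex \<Rightarrow> complex) \<Rightarrow> bool" where
  "pushforward_fixes A f \<longleftrightarrow>
     (\<forall>z. A$2$1 * z + A$2$2 \<noteq> 0 \<longrightarrow> f (mobius A z) = deriv (mobius A) z * f z)"

end

theory Submission
  imports Defs "HOL-Computational_Algebra.Polynomial"
begin

text \<open>Write \<open>A = (a b; c d)\<close>. Since \<open>det A = 1\<close>, the derivative of \<open>\<chi>\<^sup>A\<close> is \<open>(c z + d)\<^sup>-\<^sup>2\<close>, so
  \<open>\<chi>\<^sup>A\<^sub>\<star>\<xi> = \<xi>\<close> says \<open>(a z + b)\<^sup>2 + \<mu>\<^sub>0 (c z + d)\<^sup>2 = z\<^sup>2 + \<mu>\<^sub>0\<close> away from the pole: \<open>A\<close> preserves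
  the binary quadratic form \<open>x\<^sup>2 + \<mu>\<^sub>0 y\<^sup>2\<close>. Comparing coefficients gives
  \<open>a\<^sup>2 + \<mu>\<^sub>0 c\<^sup>2 = 1\<close>, \<open>a b + \<mu>\<^sub>0 c d = 0\<close>, \<open>b\<^sup>2 + \<mu>\<^sub>0 d\<^sup>2 = \<mu>\<^sub>0\<close>, i.e. \<open>A\<^sup>T M A = M\<close> for
  \<open>M = diag(1, \<mu>\<^sub>0)\<close>; together with \<open>a d - b c = 1\<close> this is \<open>M A = A\<^sup>-\<^sup>T M\<close>, which reads
  \<open>a = d\<close>, \<open>b = -\<mu>\<^sub>0 c\<close>.\<close>

lemma quadratic_coeffs_eq_0_cofinite:
  fixes p0 p1 p2 :: "'a::{idom,ring_char_0}"
  assumes "finite S" and "\<And>z. z \<notin> S \<Longrightarrow> p2 * z^2 + p1 * z + p0 = 0"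
  shows "p0 = 0 \<and> p1 = 0 \<and> p2 = 0"
proof -
  have "UNIV - S \<subseteq> {z. poly [:p0, p1, p2:] z = 0}"
    using assms(2) by (auto simp: algebra_simps power2_eq_square)
  moreover have "infinite (UNIV - S)"
    using assms(1) infinite_UNIV_char_0 by auto
  ultimately have "[:p0, p1, p2:] = 0"
    using finite_subset poly_roots_finite by blast
  then show ?thesis by simp
qed

lemma mobius_has_field_derivative:
  assumes "A$2$1 * z + A$2$2 \<noteq> 0"
  shows "(mobius A has_field_derivative det A / (A$2$1 * z + A$2$2)^2) (at z)"
proof -
  have "(mobius A has_field_derivative
          (A$1$1 * (A$2$1 * z + A$2$2) - (A$1$1 * z + A$1$2) * A$2$1) / (A$2$1 * z + A$2$2)^2) (at z)"
    unfolding mobius_def [abs_def]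
    by (rule derivative_eq_intros refl | use assms in \<open>simp add: power2_eq_square\<close>)+
  then show ?thesis
    by (simp add: det_2 algebra_simps)
qed

lemma deriv_mobius_unimodular:
  assumes "det A = 1" and "A$2$1 * z + A$2$2 \<noteq> 0"
  shows "deriv (mobius A) z = 1 / (A$2$1 * z + A$2$2)^2"
  using DERIV_imp_deriv [OF mobius_has_field_derivative [OF assms(2)]] assms(1) by simp

lemma pushforward_fixes_unimodular_iff:
  assumes "det A = 1"
  shows "pushforward_fixes A f \<longleftrightarrow>
    (\<forall>z. A$2$1 * z + A$2$2 \<noteq> 0 \<longrightarrow> (A$2$1 * z + A$2$2)^2 * f (mobius A z) = f z)"
proof -
  have "f (mobius A z) = deriv (mobius A) z * f z \<longleftrightarrow>
          (A$2$1 * z + A$2$2)^2 * f (mobius A z) = f z"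
    if "A$2$1 * z + A$2$2 \<noteq> 0" for z
    using that by (simp add: deriv_mobius_unimodular [OF assms] field_simps)
  then show ?thesis
    unfolding pushforward_fixes_def by blast
qed

lemma canonical_gckv_pushforward_fixes_iff:
  assumes "det A = 1"
  shows "pushforward_fixes A (gckv_coeff \<mu>0 0 2) \<longleftrightarrow>
    (\<forall>z. A$2$1 * z + A$2$2 \<noteq> 0 \<longrightarrow>
       (A$1$1 * z + A$1$2)^2 + \<mu>0 * (A$2$1 * z + A$2$2)^2 = z^2 + \<mu>0)"
proof -
  have "(A$2$1 * z + A$2$2)^2 * gckv_coeff \<mu>0 0 2 (mobius A z) =
          (A$1$1 * z + A$1$2)^2 + \<mu>0 * (A$2$1 * z + A$2$2)^2"
    if "A$2$1 * z + A$2$2 \<noteq> 0" for z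
    using that by (simp add: gckv_coeff_def mobius_def power_divide field_simps)
  then show ?thesis
    unfolding pushforward_fixes_unimodular_iff [OF assms] by (auto simp: gckv_coeff_def add.commute)
qed

lemma quadratic_form_preserved_iff:
  fixes a b c d \<mu> :: "'a::field_char_0"
  assumes "c \<noteq> 0 \<or> d \<noteq> 0"
  shows "(\<forall>z. c * z + d \<noteq> 0 \<longrightarrow> (a * z + b)^2 + \<mu> * (c * z + d)^2 = z^2 + \<mu>) \<longleftrightarrow>
         a^2 + \<mu> * c^2 = 1 \<and> a * b + \<mu> * c * d = 0 \<and> b^2 + \<mu> * d^2 = \<mu>"
proof -
  have expand: "(a * z + b)^2 + \<mu> * (c * z + d)^2 - (z^2 + \<mu>) =
      (a^2 + \<mu> * c^2 - 1) * z^2 + (2 * (a * b + \<mu> * c * d)) * z + (b^2 + \<mu> * d^2 - \<mu>)" for z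
    by (simp add: algebra_simps power2_eq_square)
  have finite: "finite {z. c * z + d = 0}"
  proof (cases "c = 0")
    case False
    then have "{z. c * z + d = 0} = {- d / c}" by (auto simp: field_simps add_eq_0_iff)
    then show ?thesis by simp
  qed (use assms in simp)
  show ?thesis
  proof
    assume "\<forall>z. c * z + d \<noteq> 0 \<longrightarrow> (a * z + b)^2 + \<mu> * (c * z + d)^2 = z^2 + \<mu>"
    then have "(a^2 + \<mu> * c^2 - 1) * z^2 + (2 * (a * b + \<mu> * c * d)) * z + (b^2 + \<mu> * d^2 - \<mu>) = 0"
      if "z \<notin> {z. c * z + d = 0}" for z
      using that expand [of z] by auto
    from quadratic_coeffs_eq_0_cofinite [OF finite this]
    show "a^2 + \<mu> * c^2 = 1 \<and> a * b + \<mu> * c * d = 0 \<and> b^2 + \<mu> * d^2 = \<mu>"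
      by (simp del: distrib_left_numeral)
  next
    assume "a^2 + \<mu> * c^2 = 1 \<and> a * b + \<mu> * c * d = 0 \<and> b^2 + \<mu> * d^2 = \<mu>"
    then show "\<forall>z. c * z + d \<noteq> 0 \<longrightarrow> (a * z + b)^2 + \<mu> * (c * z + d)^2 = z^2 + \<mu>"
      using expand by (simp add: right_minus_eq)
  qed
qed

lemma unimodular_quadratic_form_preserved_iff:
  fixes a b c d \<mu> :: "'a::comm_ring_1"
  assumes det: "a * d - b * c = 1"
  shows "(a^2 + \<mu> * c^2 = 1 \<and> a * b + \<mu> * c * d = 0 \<and> b^2 + \<mu> * d^2 = \<mu>) \<longleftrightarrow>
         a = d \<and> b = - c * \<mu> \<and> d^2 + \<mu> * c^2 = 1"
proof (intro iffI; elim conjE)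
  assume e1: "a^2 + \<mu> * c^2 = 1" and e2: "a * b + \<mu> * c * d = 0" and e3: "b^2 + \<mu> * d^2 = \<mu>"
  have "a = a * (a * d - b * c)"
    using det by simp
  also have "\<dots> = d * (a^2 + \<mu> * c^2) - c * (a * b + \<mu> * c * d)"
    by (simp add: algebra_simps power2_eq_square)
  finally have "a = d" using e1 e2 by simp
  have "b = b * (a * d - b * c)"
    using det by simp
  also have "\<dots> = d * (a * b + \<mu> * c * d) - c * (b^2 + \<mu> * d^2)"
    by (simp add: algebra_simps power2_eq_square)
  finally have "b = - c * \<mu>" using e2 e3 by simp
  with \<open>a = d\<close> e1 show "a = d \<and> b = - c * \<mu> \<and> d^2 + \<mu> * c^2 = 1" by simp
next
  assume "a = d" "b = - c * \<mu>" "d^2 + \<mu> * c^2 = 1"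
  moreover have "(- c * \<mu>)^2 + \<mu> * d^2 = \<mu> * (d^2 + \<mu> * c^2)"
    by (simp add: algebra_simps power2_eq_square)
  ultimately show "a^2 + \<mu> * c^2 = 1 \<and> a * b + \<mu> * c * d = 0 \<and> b^2 + \<mu> * d^2 = \<mu>"
    by (simp add: algebra_simps)
qed

lemma unimodular_fixes_canonical_gckv_iff:
  assumes "det A = 1"
  shows "pushforward_fixes A (gckv_coeff \<mu>0 0 2) \<longleftrightarrow>
    (A$1$1)^2 + \<mu>0 * (A$2$1)^2 = 1 \<and> A$1$1 * A$1$2 + \<mu>0 * A$2$1 * A$2$2 = 0 \<and>
    (A$1$2)^2 + \<mu>0 * (A$2$2)^2 = \<mu>0"
proof -
  have "A$2$1 \<noteq> 0 \<or> A$2$2 \<noteq> 0"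
    using assms by (auto simp: det_2)
  then show ?thesis
    by (simp add: canonical_gckv_pushforward_fixes_iff [OF assms] quadratic_form_preserved_iff)
qed

lemma mat2_eq_vector_iff:
  fixes A :: "'a::zero^2^2"
  shows "A = vector [vector [p, q], vector [r, s]] \<longleftrightarrow>
         A$1$1 = p \<and> A$1$2 = q \<and> A$2$1 = r \<and> A$2$2 = s"
  by (auto simp: vec_eq_iff forall_2)

theorem corollary7p3:
  fixes \<mu>0 :: complex
  shows "{A :: complex^2^2. det A = 1 \<and> pushforward_fixes A (gckv_coeff \<mu>0 0 2)} =
         {A. \<exists>\<gamma> \<delta> :: complex. \<delta>^2 + \<mu>0 * \<gamma>^2 = 1 \<and>
              A = vector [vector [\<delta>, - \<gamma> * \<mu>0], vector [\<gamma>, \<delta>]]}"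
proof (rule set_eqI, unfold mem_Collect_eq)
  fix A :: "complex^2^2"
  obtain a b c d where entries: "A$1$1 = a" "A$1$2 = b" "A$2$1 = c" "A$2$2 = d" by blast
  have det: "det A = a * d - b * c"
    by (simp add: det_2 entries)
  have "det A = 1 \<and> pushforward_fixes A (gckv_coeff \<mu>0 0 2) \<longleftrightarrow>
        a * d - b * c = 1 \<and> a^2 + \<mu>0 * c^2 = 1 \<and> a * b + \<mu>0 * c * d = 0 \<and> b^2 + \<mu>0 * d^2 = \<mu>0"
    using unimodular_fixes_canonical_gckv_iff [of A \<mu>0] by (auto simp: det entries)
  also have "\<dots> \<longleftrightarrow> a * d - b * c = 1 \<and> a = d \<and> b = - c * \<mu>0 \<and> d^2 + \<mu>0 * c^2 = 1"
    using unimodular_quadratic_form_preserved_iff [of a d b c \<mu>0] by blast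
  also have "\<dots> \<longleftrightarrow> a = d \<and> b = - c * \<mu>0 \<and> d^2 + \<mu>0 * c^2 = 1"
    by (auto simp: power2_eq_square mult_ac)
  also have "\<dots> \<longleftrightarrow> (\<exists>\<gamma> \<delta>. \<delta>^2 + \<mu>0 * \<gamma>^2 = 1 \<and>
                        A = vector [vector [\<delta>, - \<gamma> * \<mu>0], vector [\<gamma>, \<delta>]])"
    by (auto simp: mat2_eq_vector_iff entries)
  finally show "det A = 1 \<and> pushforward_fixes A (gckv_coeff \<mu>0 0 2) \<longleftrightarrow>
      (\<exists>\<gamma> \<delta>. \<delta>^2 + \<mu>0 * \<gamma>^2 = 1 \<and> A = vector [vector [\<delta>, - \<gamma> * \<mu>0], vector [\<gamma>, \<delta>]])" .
qed

end
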